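(* Let $a\in(0,1]$ and $\theta\in C^1((0,\infty))$ with $\sup_{r>0}|r\theta'(r)|<\infty$. Then for all $u\in H_0^1(\Omega)$, $$\int_\Omega|\nabla u(x)|^2\,dx\ \ge\ \frac1{4a^2}\int_\Omega\frac{|u(x)|^2}{|x|^2}\,dx.$$
   Context: Curved wedge $\Omega:=\{(r\cos[\varphi+\theta(r)],r\sin[\varphi+\theta(r)]):r>0,\ \varphi\in(0,2\pi a)\}\subset\mathbb{R}^2$. *)

theory Defs
  imports "HOL-Analysis.Analysis"
begin

definition curved_wedge :: "real \<Rightarrow> (real \<Rightarrow> real) \<Rightarrow> (real \<times> real) set" where
  "curved_wedge a \<theta> =
     {(r * cos (\<phi> + \<theta> r), r * sin (\<phi> + \<theta> r)) | r \<phi>. r > 0 \<and> \<phi> \<in> {0<..<2 * pi * a}}"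

text \<open>C-infinity functions on the plane: D i j is the partial derivative
  of order i in the first and j in the second variable; all of them exist and
  are (Frechet) differentiable everywhere.\<close>
definition smooth2 :: "(real \<times> real \<Rightarrow> real) \<Rightarrow> bool" where
  "smooth2 f \<longleftrightarrow> (\<exists>D :: nat \<Rightarrow> nat \<Rightarrow> (real \<times> real \<Rightarrow> real).
      D 0 0 = f \<and>
      (\<forall>i j x. (D i j has_derivative
                 (\<lambda>h. fst h * D (Suc i) j x + snd h * D i (Suc j) x)) (at x)))"

definition test_fun :: "(real \<times> real) set \<Rightarrow> (real \<times> real \<Rightarrow> real) \<Rightarrow> bool" where
  "test_fun \<Omega> f \<longleftrightarrow> smooth2 f \<and> compact (closure {x. f x \<noteq> 0})
                       \<and> closure {x. f x \<noteq> 0} \<subseteq> \<Omega>"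

text \<open>u belongs to H_0^1(Omega) (closure of C_c^infinity(Omega) in the H^1 norm)
  and g is its (weak) gradient: there are test functions phi_n with
  phi_n \<rightarrow> u and grad phi_n \<rightarrow> g in L^2(R^2).\<close>
definition H01_grad :: "(real \<times> real) set \<Rightarrow> (real \<times> real \<Rightarrow> real)
                          \<Rightarrow> (real \<times> real \<Rightarrow> real \<times> real) \<Rightarrow> bool" where
  "H01_grad \<Omega> u g \<longleftrightarrow>
     u \<in> borel_measurable lborel \<and> g \<in> borel_measurable lborel \<and>
     (\<exists>\<phi> :: nat \<Rightarrow> real \<times> real \<Rightarrow> real. \<exists>G :: nat \<Rightarrow> real \<times> real \<Rightarrow> real \<times> real.
        (\<forall>n. test_fun \<Omega> (\<phi> n)) \<and>
        (\<forall>n x. GDERIV (\<phi> n) x :> G n x) \<and>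
        (\<lambda>n. \<integral>\<^sup>+ x. ennreal ((\<phi> n x - u x)\<^sup>2) \<partial>lborel) \<longlonglongrightarrow> 0 \<and>
        (\<lambda>n. \<integral>\<^sup>+ x. ennreal ((norm (G n x - g x))\<^sup>2) \<partial>lborel) \<longlonglongrightarrow> 0)"

end

theory Submission
  imports Defs
begin

(* Let psi be the angular coordinate of the curved wedge, x = |x| (cos, sin) (psi x + theta |x|)
   with 0 < psi x < 2 pi a, and let x' = rot90 x, so that grad psi . x' = 1 and x . x' = 0.
   The rotation field x' is divergence free, hence the integral of grad q . x' vanishes for every
   compactly supported C^1 function q.  For a test function f take q = f^2 C(psi) / |x|^2 with
   C t = k cot (k t), k = 1 / (2 a), which is finite on the wedge; then
   grad q . x' = (2 f C(psi) (grad f . x') + f^2 C'(psi)) / |x|^2, and since C solves the Riccati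
   equation C' + C^2 = -k^2, completing the square gives |grad f|^2 >= grad q . x' + k^2 f^2 / |x|^2.
   Integrating proves the inequality for test functions.  It extends to H_0^1 by approximation,
   first on the sets where the weight 1 / |x|^2 is bounded and then by monotone convergence. *)

section \<open>The angular coordinate of a curved wedge\<close>

definition complex_of_pair :: "real \<times> real \<Rightarrow> complex" where
  "complex_of_pair x = Complex (fst x) (snd x)"

definition rot90 :: "real \<times> real \<Rightarrow> real \<times> real" where
  "rot90 x = (- snd x, fst x)"

(* Multiplying by cis (- theta |x|) undoes the twist of the wedge and the sign change moves its
   boundary ray onto the branch cut of Ln, so wedge_angle recovers the parameter phi of
   curved_wedge_def (wedge_angle_polar, polar_wedge_angle). *)
definition unwound :: "(real \<Rightarrow> real) \<Rightarrow> real \<times> real \<Rightarrow> complex" where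
  "unwound \<theta> x = - complex_of_pair x * cis (- \<theta> (norm x))"

definition wedge_angle :: "(real \<Rightarrow> real) \<Rightarrow> real \<times> real \<Rightarrow> real" where
  "wedge_angle \<theta> x = pi + Im (Ln (unwound \<theta> x))"

lemma complex_of_pair_has_derivative [derivative_intros]:
  "(complex_of_pair has_derivative complex_of_pair) (at x within S)"
  unfolding complex_of_pair_def[abs_def] Complex_eq
  by (rule derivative_eq_intros refl)+ simp

lemma norm_complex_of_pair [simp]: "norm (complex_of_pair x) = norm x"
  by (cases x) (simp add: complex_of_pair_def cmod_def norm_Pair)

lemma norm_unwound [simp]: "norm (unwound \<theta> x) = norm x"
  by (simp add: unwound_def norm_mult)

lemma unwound_eq_0_iff [simp]: "unwound \<theta> x = 0 \<longleftrightarrow> x = 0"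
  by (metis norm_unwound norm_eq_zero)

lemma unwound_zero [simp]: "unwound \<theta> 0 = 0"
  by simp

lemma inner_rot90_self [simp]: "inner x (rot90 x) = 0"
  by (simp add: rot90_def inner_prod_def)

lemma norm_rot90 [simp]: "norm (rot90 x) = norm x"
  by (cases x) (simp add: rot90_def norm_Pair add.commute)

lemma norm_prod_power2: "(norm x)\<^sup>2 = (fst x)\<^sup>2 + (snd x)\<^sup>2" for x :: "real \<times> real"
  by (cases x) (simp add: norm_Pair)

lemma norm_polar [simp]: "0 \<le> r \<Longrightarrow> norm (r * cos t, r * sin t) = r"
  by (simp add: norm_Pair power_mult_distrib flip: distrib_left)

lemma unwound_polar:
  assumes "0 < r"
  shows "unwound \<theta> (r * cos (\<phi> + \<theta> r), r * sin (\<phi> + \<theta> r)) = rcis r (\<phi> - pi)"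
proof -
  have "complex_of_pair (r * cos (\<phi> + \<theta> r), r * sin (\<phi> + \<theta> r)) = rcis r (\<phi> + \<theta> r)"
    by (simp add: complex_of_pair_def rcis_def complex_eq_iff)
  moreover have "- cis (\<phi> + \<theta> r) * cis (- \<theta> r) = cis (\<phi> - pi)"
    unfolding minus_cis' cis_mult by (rule arg_cong[where f = cis]) simp
  ultimately show ?thesis
    using assms unfolding unwound_def rcis_def by (simp add: mult.assoc) (metis minus_mult_right)
qed

lemma wedge_angle_polar:
  assumes "0 < r" "0 < \<phi>" "\<phi> \<le> 2 * pi"
  shows "wedge_angle \<theta> (r * cos (\<phi> + \<theta> r), r * sin (\<phi> + \<theta> r)) = \<phi>"
proof -
  have "rcis r (\<phi> - pi) \<noteq> 0" using assms by simp
  then show ?thesis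
    using assms by (simp add: wedge_angle_def unwound_polar flip: Arg_eq_Im_Ln) (simp add: Arg_rcis)
qed

lemma wedge_angle_bounds:
  assumes "x \<noteq> 0"
  shows "0 < wedge_angle \<theta> x" "wedge_angle \<theta> x \<le> 2 * pi"
proof -
  have "unwound \<theta> x \<noteq> 0" using assms by simp
  then show "0 < wedge_angle \<theta> x" "wedge_angle \<theta> x \<le> 2 * pi"
    using Arg_bounded[of "unwound \<theta> x"] by (auto simp: wedge_angle_def Arg_eq_Im_Ln)
qed

lemma polar_wedge_angle:
  assumes "x \<noteq> 0"
  shows "x = (norm x * cos (wedge_angle \<theta> x + \<theta> (norm x)), norm x * sin (wedge_angle \<theta> x + \<theta> (norm x)))"
proof -
  have nz: "unwound \<theta> x \<noteq> 0" using assms by simp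
  have "complex_of_pair x = - unwound \<theta> x * cis (\<theta> (norm x))"
    by (simp add: unwound_def mult.assoc cis_mult)
  also have "unwound \<theta> x = rcis (norm x) (wedge_angle \<theta> x - pi)"
    using rcis_cmod_Arg[of "unwound \<theta> x"] nz by (simp add: wedge_angle_def Arg_eq_Im_Ln)
  also have "- rcis (norm x) (wedge_angle \<theta> x - pi) * cis (\<theta> (norm x))
      = rcis (norm x) (wedge_angle \<theta> x + \<theta> (norm x))"
  proof -
    have "- cis (wedge_angle \<theta> x - pi) * cis (\<theta> (norm x)) = cis (wedge_angle \<theta> x + \<theta> (norm x))"
      by (simp add: minus_cis cis_mult)
    then show ?thesis unfolding rcis_def by (metis mult.assoc minus_mult_right)
  qed
  finally have "complex_of_pair x = rcis (norm x) (wedge_angle \<theta> x + \<theta> (norm x))" .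
  from arg_cong[OF this, of Re] arg_cong[OF this, of Im] show ?thesis
    by (intro prod_eqI) (simp_all add: complex_of_pair_def)
qed

lemma curved_wedge_iff:
  assumes "a \<le> 1"
  shows "x \<in> curved_wedge a \<theta> \<longleftrightarrow> x \<noteq> 0 \<and> wedge_angle \<theta> x < 2 * pi * a"
proof
  assume "x \<in> curved_wedge a \<theta>"
  then obtain r \<phi> where r: "0 < r" and \<phi>: "0 < \<phi>" "\<phi> < 2 * pi * a"
    and x: "x = (r * cos (\<phi> + \<theta> r), r * sin (\<phi> + \<theta> r))"
    unfolding curved_wedge_def by auto
  have "2 * pi * a \<le> 2 * pi" using assms by simp
  then have "\<phi> \<le> 2 * pi" using \<phi> by linarith
  then have "wedge_angle \<theta> x = \<phi>" using wedge_angle_polar r \<phi> x by blast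
  moreover have "x \<noteq> 0" using r norm_polar[of r] by (metis less_le norm_zero x)
  ultimately show "x \<noteq> 0 \<and> wedge_angle \<theta> x < 2 * pi * a" using \<phi> by simp
next
  assume x: "x \<noteq> 0 \<and> wedge_angle \<theta> x < 2 * pi * a"
  then have "0 < norm x" "wedge_angle \<theta> x \<in> {0<..<2 * pi * a}"
    using wedge_angle_bounds[of x \<theta>] by auto
  then show "x \<in> curved_wedge a \<theta>"
    unfolding curved_wedge_def using x
    by (intro CollectI exI[of _ "norm x"] exI[of _ "wedge_angle \<theta> x"] conjI polar_wedge_angle) auto
qed

lemma unwound_not_nonpos_Reals:
  assumes "x \<noteq> 0" "wedge_angle \<theta> x < 2 * pi"
  shows "unwound \<theta> x \<notin> \<real>\<^sub>\<le>\<^sub>0"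
proof
  assume nonpos: "unwound \<theta> x \<in> \<real>\<^sub>\<le>\<^sub>0"
  have nz: "unwound \<theta> x \<noteq> 0" using assms by simp
  then have "Arg (unwound \<theta> x) = pi"
    using nonpos by (auto simp: Arg_real complex_nonpos_Reals_iff complex_is_Real_iff complex_eq_iff)
  then show False
    using assms nz by (simp add: wedge_angle_def Arg_eq_Im_Ln)
qed

lemma unwound_curved_wedge:
  assumes "a \<le> 1" "x \<in> curved_wedge a \<theta>"
  shows "unwound \<theta> x \<notin> \<real>\<^sub>\<le>\<^sub>0"
proof -
  have "x \<noteq> 0" "wedge_angle \<theta> x < 2 * pi * a"
    using assms curved_wedge_iff by blast+
  moreover have "2 * pi * a \<le> 2 * pi" using assms(1) by simp
  ultimately show ?thesis
    using unwound_not_nonpos_Reals less_le_trans by metis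
qed

lemma sin_wedge_angle_ne_0:
  assumes "0 < a" "a \<le> 1" "x \<in> curved_wedge a \<theta>"
  shows "sin (1 / (2 * a) * wedge_angle \<theta> x) \<noteq> 0"
proof -
  have "x \<noteq> 0" "wedge_angle \<theta> x < 2 * pi * a"
    using assms curved_wedge_iff by blast+
  then have "0 < 1 / (2 * a) * wedge_angle \<theta> x" "1 / (2 * a) * wedge_angle \<theta> x < pi"
    using wedge_angle_bounds[of x \<theta>] assms(1) by (auto simp: field_simps)
  then show ?thesis using sin_gt_zero by fastforce
qed

lemma open_curved_wedge:
  assumes "a \<le> 1" and \<theta>: "continuous_on {0<..} \<theta>"
  shows "open (curved_wedge a \<theta>)"
proof -
  define U where "U = - {0} \<inter> unwound \<theta> -` (- \<real>\<^sub>\<le>\<^sub>0)"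
  have "continuous_on (- {0}) (unwound \<theta>)"
    unfolding unwound_def[abs_def] complex_of_pair_def
    by (intro continuous_intros continuous_on_compose2[OF \<theta>]) auto
  then have "open U"
    unfolding U_def by (intro continuous_open_preimage) auto
  moreover have "continuous_on U (wedge_angle \<theta>)"
    unfolding wedge_angle_def[abs_def]
    by (intro continuous_intros continuous_on_compose2[OF \<open>continuous_on (- {0}) (unwound \<theta>)\<close>])
       (auto simp: U_def)
  ultimately have "open (U \<inter> wedge_angle \<theta> -` {..<2 * pi * a})"
    by (intro continuous_open_preimage) auto
  moreover have "U \<inter> wedge_angle \<theta> -` {..<2 * pi * a} = curved_wedge a \<theta>"
    using unwound_curved_wedge[OF assms(1)] by (auto simp: U_def curved_wedge_iff[OF assms(1)])
  ultimately show ?thesis by simp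
qed

lemma has_derivative_cis:
  assumes "(f has_derivative f') (at x within S)"
  shows "((\<lambda>x. cis (f x)) has_derivative (\<lambda>v. \<i> * of_real (f' v) * cis (f x))) (at x within S)"
  unfolding cis.code Complex_eq
  by (rule derivative_eq_intros assms refl)+ (simp add: fun_eq_iff complex_eq_iff)

lemma unwound_has_derivative:
  assumes \<theta>: "(\<theta> has_real_derivative \<theta>') (at (norm x))" and x: "x \<noteq> 0"
  shows "(unwound \<theta> has_derivative (\<lambda>v. unwound \<theta> x *
           (complex_of_pair v / complex_of_pair x - \<i> * of_real (inner v (sgn x) * \<theta>')))) (at x)"
proof -
  have cx: "complex_of_pair x \<noteq> 0" using x by (metis norm_complex_of_pair norm_eq_zero)
  have "((\<lambda>x. \<theta> (norm x)) has_derivative (\<lambda>v. inner v (sgn x) * \<theta>')) (at x)"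
    using DERIV_compose_FDERIV[OF \<theta> has_derivative_norm[OF x]] by (simp add: inner_commute)
  then have "(unwound \<theta> has_derivative (\<lambda>v. - complex_of_pair x *
      (\<i> * of_real (- (inner v (sgn x) * \<theta>')) * cis (- \<theta> (norm x))) +
      - complex_of_pair v * cis (- \<theta> (norm x)))) (at x)"
    unfolding unwound_def[abs_def]
    by (intro has_derivative_mult has_derivative_minus has_derivative_cis complex_of_pair_has_derivative)
  then show ?thesis
    by (rule has_derivative_eq_rhs) (simp add: fun_eq_iff unwound_def field_simps cx)
qed

lemma Im_complex_of_pair_divide:
  "Im (complex_of_pair v / complex_of_pair x) = inner v (rot90 x) / (norm x)\<^sup>2"
  by (simp add: Im_divide complex_of_pair_def rot90_def inner_prod_def norm_prod_power2)

definition wedge_angle_gradient :: "(real \<Rightarrow> real) \<Rightarrow> real \<times> real \<Rightarrow> real \<times> real" where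
  "wedge_angle_gradient \<theta> x = (1 / (norm x)\<^sup>2) *\<^sub>R rot90 x - (deriv \<theta> (norm x) / norm x) *\<^sub>R x"

lemma inner_wedge_angle_gradient_rot90:
  "x \<noteq> 0 \<Longrightarrow> inner (wedge_angle_gradient \<theta> x) (rot90 x) = 1"
  by (simp add: wedge_angle_gradient_def inner_diff_left power2_norm_eq_inner[symmetric])

lemma wedge_angle_has_derivative:
  assumes "\<theta> differentiable (at (norm x))" and nonpos: "unwound \<theta> x \<notin> \<real>\<^sub>\<le>\<^sub>0"
  shows "(wedge_angle \<theta> has_derivative (\<lambda>v. inner v (wedge_angle_gradient \<theta> x))) (at x)"
proof -
  define \<theta>' where "\<theta>' = deriv \<theta> (norm x)"
  have \<theta>: "(\<theta> has_real_derivative \<theta>') (at (norm x))"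
    using assms(1) by (simp add: \<theta>'_def DERIV_deriv_iff_real_differentiable)
  have x: "x \<noteq> 0" using nonpos by auto
  then have z: "unwound \<theta> x \<noteq> 0" by simp
  have "((\<lambda>x. Ln (unwound \<theta> x)) has_derivative (\<lambda>v. inverse (unwound \<theta> x) * (unwound \<theta> x *
           (complex_of_pair v / complex_of_pair x - \<i> * of_real (inner v (sgn x) * \<theta>'))))) (at x)"
    using has_derivative_compose[OF unwound_has_derivative[OF \<theta> x]
        has_field_derivative_Ln[OF nonpos, unfolded has_field_derivative_def]] by (simp add: o_def)
  then have "(wedge_angle \<theta> has_derivative (\<lambda>v. 0 + Im (inverse (unwound \<theta> x) * (unwound \<theta> x *
           (complex_of_pair v / complex_of_pair x - \<i> * of_real (inner v (sgn x) * \<theta>')))))) (at x)"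
    unfolding wedge_angle_def[abs_def]
    by (intro has_derivative_add has_derivative_const bounded_linear.has_derivative[OF bounded_linear_Im])
  moreover have "inverse (unwound \<theta> x) * (unwound \<theta> x * w) = w" for w
    using z by simp
  ultimately have "(wedge_angle \<theta> has_derivative
      (\<lambda>v. inner v (rot90 x) / (norm x)\<^sup>2 - norm x * inner v x * \<theta>' / (norm x)\<^sup>2)) (at x)"
    by (simp add: Im_complex_of_pair_divide sgn_div_norm)
  then show ?thesis
    by (rule has_derivative_eq_rhs)
       (use x in \<open>simp add: fun_eq_iff wedge_angle_gradient_def \<theta>'_def inner_diff_right power2_eq_square\<close>)
qed

section \<open>Integrals of angular derivatives\<close>

lemma has_derivative_partial_fst:
  assumes "(F has_derivative F') (at (t, y))"
  shows "((\<lambda>t. F (t, y)) has_real_derivative F' (1, 0)) (at t)"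
proof (rule has_derivative_imp_has_field_derivative)
  show "((\<lambda>t. F (t, y)) has_derivative (\<lambda>s. F' (s, 0))) (at t)"
    using has_derivative_compose[OF has_derivative_Pair[OF has_derivative_ident has_derivative_const] assms]
    by (simp add: o_def)
  show "s * F' (1, 0) = F' (s, 0)" for s
    using linear_scale[OF has_derivative_linear[OF assms], of s "(1, 0)"] by simp
qed

lemma has_derivative_partial_snd:
  assumes "(F has_derivative F') (at (t, y))"
  shows "((\<lambda>y. F (t, y)) has_real_derivative F' (0, 1)) (at y)"
proof (rule has_derivative_imp_has_field_derivative)
  show "((\<lambda>y. F (t, y)) has_derivative (\<lambda>s. F' (0, s))) (at y)"
    using has_derivative_compose[OF has_derivative_Pair[OF has_derivative_const has_derivative_ident] assms]
    by (simp add: o_def)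
  show "s * F' (0, 1) = F' (0, s)" for s
    using linear_scale[OF has_derivative_linear[OF assms], of s "(0, 1)"] by simp
qed

lemma integral_deriv_eq_0:
  fixes w p :: "real \<Rightarrow> real"
  assumes deriv: "\<And>t. (w has_real_derivative p t) (at t)" and cont: "continuous_on UNIV p"
    and vanish: "\<And>t. A \<le> \<bar>t\<bar> \<Longrightarrow> w t = 0 \<and> p t = 0"
  shows "integral\<^sup>L lborel p = 0"
proof (cases "0 < A")
  case True
  have "integral\<^sup>L lborel p = (\<integral>t. indicator {-A..A} t *\<^sub>R p t \<partial>lborel)"
  proof (intro Bochner_Integration.integral_cong refl)
    show "p t = indicator {-A..A} t *\<^sub>R p t" for t
      using vanish[of t] by (cases "A \<le> \<bar>t\<bar>") (auto simp: indicator_def)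
  qed
  also have "\<dots> = w A - w (- A)"
    using True deriv
    by (intro integral_FTC_atLeastAtMost continuous_on_subset[OF cont])
       (auto simp: has_real_derivative_iff_has_vector_derivative intro: has_vector_derivative_at_within)
  also have "\<dots> = 0" using vanish[of A] vanish[of "- A"] by simp
  finally show ?thesis .
next
  case False
  then have "A \<le> \<bar>t\<bar>" for t using abs_ge_zero[of t] by linarith
  then have "p = (\<lambda>_. 0)" using vanish by blast
  then show ?thesis by simp
qed

lemma integrable_continuous_compact_support:
  fixes f :: "'a::euclidean_space \<Rightarrow> real"
  assumes "continuous_on UNIV f" "compact K" "\<And>x. x \<notin> K \<Longrightarrow> f x = 0"
  shows "integrable lborel f"
proof -
  have "integrable lborel (\<lambda>x. indicator K x *\<^sub>R f x)"
    by (rule borel_integrable_compact[OF assms(2) continuous_on_subset[OF assms(1)]]) simp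
  moreover have "(\<lambda>x. indicator K x *\<^sub>R f x) = f"
    using assms(3) by (auto simp: fun_eq_iff indicator_def of_bool_def)
  ultimately show ?thesis by simp
qed

lemma integral_partial_fst_eq_0:
  fixes W P :: "real \<times> real \<Rightarrow> real"
  assumes deriv: "\<And>t y. ((\<lambda>t. W (t, y)) has_real_derivative P (t, y)) (at t)"
    and cont: "continuous_on UNIV P" and K: "compact K"
    and vanish: "\<And>x. x \<notin> K \<Longrightarrow> W x = 0 \<and> P x = 0"
  shows "integral\<^sup>L lborel P = 0"
proof -
  obtain B where B: "\<And>x. x \<in> K \<Longrightarrow> norm x \<le> B"
    using compact_imp_bounded[OF K] by (auto simp: bounded_iff)
  have outside: "B + 1 \<le> \<bar>t\<bar> \<Longrightarrow> (t, y) \<notin> K" for t y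
    using B[of "(t, y)"] norm_fst_le[of t y] by auto
  have slice: "(\<integral>t. P (t, y) \<partial>lborel) = 0" for y
    by (rule integral_deriv_eq_0[OF deriv _ vanish[OF outside]])
       (intro continuous_on_compose2[OF cont] continuous_intros; simp)
  have "integrable lborel P"
    by (rule integrable_continuous_compact_support[OF cont K]) (use vanish in blast)
  then have "integral\<^sup>L lborel P = (\<integral>y. (\<integral>t. P (t, y) \<partial>lborel) \<partial>lborel)"
    by (simp add: lborel_prod lborel_pair.integral_snd)
  also have "\<dots> = 0" by (simp add: slice)
  finally show ?thesis .
qed

lemma integral_partial_snd_eq_0:
  fixes W P :: "real \<times> real \<Rightarrow> real"
  assumes deriv: "\<And>t y. ((\<lambda>y. W (t, y)) has_real_derivative P (t, y)) (at y)"
    and cont: "continuous_on UNIV P" and K: "compact K"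
    and vanish: "\<And>x. x \<notin> K \<Longrightarrow> W x = 0 \<and> P x = 0"
  shows "integral\<^sup>L lborel P = 0"
proof -
  obtain B where B: "\<And>x. x \<in> K \<Longrightarrow> norm x \<le> B"
    using compact_imp_bounded[OF K] by (auto simp: bounded_iff)
  have outside: "B + 1 \<le> \<bar>y\<bar> \<Longrightarrow> (t, y) \<notin> K" for t y
    using B[of "(t, y)"] norm_snd_le[of y t] by auto
  have slice: "(\<integral>y. P (t, y) \<partial>lborel) = 0" for t
    by (rule integral_deriv_eq_0[OF deriv _ vanish[OF outside]])
       (intro continuous_on_compose2[OF cont] continuous_intros; simp)
  have "integrable lborel P"
    by (rule integrable_continuous_compact_support[OF cont K]) (use vanish in blast)
  then have "integral\<^sup>L lborel P = (\<integral>t. (\<integral>y. P (t, y) \<partial>lborel) \<partial>lborel)"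
    by (simp add: lborel_prod lborel_pair.integral_fst')
  also have "\<dots> = 0" by (simp add: slice)
  finally show ?thesis .
qed

lemma eventually_zero_outside:
  assumes "closed K" "x \<notin> K" "\<And>y. y \<notin> K \<Longrightarrow> f y = 0"
  shows "\<forall>\<^sub>F y in nhds x. f y = 0"
  using assms by (intro eventually_nhds_in_open[of "- K", THEN eventually_mono]) auto

lemma has_derivative_zero_outside:
  assumes "closed K" "x \<notin> K" "\<And>y. y \<notin> K \<Longrightarrow> f y = 0"
  shows "(f has_derivative (\<lambda>v. 0)) (at x)"
  by (rule has_derivative_transform_within_open[OF has_derivative_const[of 0], where s = "- K"])
     (use assms in auto)

lemma isCont_zero_outside:
  assumes "closed K" "x \<notin> K" "\<And>y. y \<notin> K \<Longrightarrow> f y = 0"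
  shows "isCont f x"
  using isCont_cong[OF eventually_zero_outside[OF assms]] by simp

lemma gradient_zero_outside:
  assumes "(f has_derivative (\<lambda>v. inner v G)) (at x)"
    and "closed K" "x \<notin> K" "\<And>y. y \<notin> K \<Longrightarrow> f y = 0"
  shows "G = 0"
proof -
  have "(\<lambda>v. inner v G) = (\<lambda>v. 0)"
    using has_derivative_unique[OF assms(1) has_derivative_zero_outside[OF assms(2-4)]] .
  from fun_cong[OF this, of G] show ?thesis by simp
qed

(* rot90 is divergence free: at x = (t, y), inner (Q x) (rot90 x) is the sum of the partial
   derivatives of - y * q x in t and of t * q x in y. *)
lemma integral_inner_gradient_rot90_eq_0:
  fixes q :: "real \<times> real \<Rightarrow> real" and Q :: "real \<times> real \<Rightarrow> real \<times> real"
  assumes deriv: "\<And>x. (q has_derivative (\<lambda>v. inner v (Q x))) (at x)"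
    and cont: "continuous_on UNIV Q" and K: "compact K" and vanish: "\<And>x. x \<notin> K \<Longrightarrow> q x = 0"
  shows "integrable lborel (\<lambda>x. inner (Q x) (rot90 x))"
    and "integral\<^sup>L lborel (\<lambda>x. inner (Q x) (rot90 x)) = 0"
proof -
  have Q0: "Q x = 0" if "x \<notin> K" for x
    using gradient_zero_outside[OF deriv compact_imp_closed[OF K] that vanish] .
  define P1 where "P1 x = - snd x * fst (Q x)" for x
  define P2 where "P2 x = fst x * snd (Q x)" for x
  have cont1: "continuous_on UNIV P1" and cont2: "continuous_on UNIV P2"
    unfolding P1_def[abs_def] P2_def[abs_def] by (intro continuous_intros cont)+
  have int1: "integrable lborel P1" and int2: "integrable lborel P2"
    by (rule integrable_continuous_compact_support[OF _ K], fact, simp add: P1_def P2_def Q0)+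
  have "integral\<^sup>L lborel P1 = 0"
  proof (rule integral_partial_fst_eq_0[OF _ cont1 K])
    show "((\<lambda>t. - snd (t, y) * q (t, y)) has_real_derivative P1 (t, y)) (at t)" for t y
      using has_derivative_partial_fst[OF has_derivative_mult[OF
          has_derivative_minus[OF has_derivative_snd[OF has_derivative_ident]] deriv]]
      by (simp add: P1_def inner_prod_def)
    show "x \<notin> K \<Longrightarrow> - snd x * q x = 0 \<and> P1 x = 0" for x
      by (simp add: P1_def Q0 vanish)
  qed
  moreover have "integral\<^sup>L lborel P2 = 0"
  proof (rule integral_partial_snd_eq_0[OF _ cont2 K])
    show "((\<lambda>y. fst (t, y) * q (t, y)) has_real_derivative P2 (t, y)) (at y)" for t y
      using has_derivative_partial_snd[OF has_derivative_mult[OF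
          has_derivative_fst[OF has_derivative_ident] deriv]]
      by (simp add: P2_def inner_prod_def)
    show "x \<notin> K \<Longrightarrow> fst x * q x = 0 \<and> P2 x = 0" for x
      by (simp add: P2_def Q0 vanish)
  qed
  moreover have "(\<lambda>x. inner (Q x) (rot90 x)) = (\<lambda>x. P1 x + P2 x)"
    by (auto simp: fun_eq_iff P1_def P2_def rot90_def inner_prod_def)
  ultimately show "integrable lborel (\<lambda>x. inner (Q x) (rot90 x))"
    and "integral\<^sup>L lborel (\<lambda>x. inner (Q x) (rot90 x)) = 0"
    using int1 int2 by simp_all
qed

section \<open>Hardy's inequality for compactly supported functions\<close>

lemma scaled_cot_has_derivative:
  assumes "sin (k * t) \<noteq> 0"
  shows "((\<lambda>t. k * cot (k * t)) has_real_derivative - (k / sin (k * t))\<^sup>2) (at t)"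
proof -
  have "((\<lambda>t. cot (k * t)) has_real_derivative - inverse ((sin (k * t))\<^sup>2) * k) (at t)"
    by (rule DERIV_chain2[where g = "\<lambda>t. k * t" and x = t, OF DERIV_cot[OF assms]])
       (auto intro!: derivative_eq_intros)
  from DERIV_cmult[OF this, of k] show ?thesis
    by (rule DERIV_cong) (simp add: power_divide field_simps power2_eq_square)
qed

lemma scaled_cot_riccati:
  assumes "sin (k * t) \<noteq> 0"
  shows "- (k / sin (k * t))\<^sup>2 + (k * cot (k * t))\<^sup>2 = - k\<^sup>2"
proof -
  have "(k * cot (k * t))\<^sup>2 = (k / sin (k * t))\<^sup>2 - k\<^sup>2"
    using assms by (simp add: cot_def power_divide power_mult_distrib cos_squared_eq field_simps)
  then show ?thesis by simp
qed

lemma hardy_pointwise_bound: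
  fixes x g :: "real \<times> real"
  assumes "x \<noteq> 0" and riccati: "D + C\<^sup>2 = - k\<^sup>2"
  shows "(2 * F * C * inner g (rot90 x) + F\<^sup>2 * D) / (norm x)\<^sup>2 + k\<^sup>2 * (F\<^sup>2 / (norm x)\<^sup>2)
         \<le> (norm g)\<^sup>2"
proof -
  define w where "w = inner g (rot90 x)"
  have nx: "0 < (norm x)\<^sup>2" using assms by simp
  have D: "D = - k\<^sup>2 - C\<^sup>2" using riccati by linarith
  have square: "2 * F * C * w + F\<^sup>2 * D + k\<^sup>2 * F\<^sup>2 = w\<^sup>2 - (w - F * C)\<^sup>2"
    unfolding D by (simp add: power2_eq_square algebra_simps)
  have "(2 * F * C * w + F\<^sup>2 * D) / (norm x)\<^sup>2 + k\<^sup>2 * (F\<^sup>2 / (norm x)\<^sup>2)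
      = (2 * F * C * w + F\<^sup>2 * D + k\<^sup>2 * F\<^sup>2) / (norm x)\<^sup>2"
    by (simp add: add_divide_distrib)
  also have "\<dots> = (w\<^sup>2 - (w - F * C)\<^sup>2) / (norm x)\<^sup>2"
    by (simp only: square)
  also have "\<dots> \<le> w\<^sup>2 / (norm x)\<^sup>2"
    using nx by (intro divide_right_mono) auto
  also have "\<dots> \<le> (norm g)\<^sup>2"
  proof -
    have "\<bar>w\<bar> \<le> norm g * norm x"
      using Cauchy_Schwarz_ineq2[of g "rot90 x"] by (simp add: w_def)
    then have "\<bar>w\<bar>\<^sup>2 \<le> (norm g * norm x)\<^sup>2"
      by (rule power_mono) simp
    then have "w\<^sup>2 \<le> (norm g)\<^sup>2 * (norm x)\<^sup>2"
      by (simp add: power_mult_distrib)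
    then show ?thesis using nx by (simp add: divide_le_eq)
  qed
  finally show ?thesis by (simp add: w_def)
qed

lemma has_derivative_divide_norm_power2:
  fixes x :: "'a::real_inner"
  assumes p: "(p has_derivative (\<lambda>v. inner v P)) (at x)" and x: "x \<noteq> 0"
  shows "((\<lambda>x. p x / (norm x)\<^sup>2) has_derivative
           (\<lambda>v. inner v ((1 / (norm x)\<^sup>2) *\<^sub>R P - (2 * p x / (norm x) ^ 4) *\<^sub>R x))) (at x)"
proof -
  have n: "((\<lambda>x. (norm x)\<^sup>2) has_derivative (\<lambda>v. 2 * inner v x)) (at x)"
    unfolding power2_norm_eq_inner
    by (rule derivative_eq_intros refl)+ (simp add: fun_eq_iff inner_commute)
  have "(norm x)\<^sup>2 \<noteq> 0" using x by simp
  from has_derivative_divide'[OF p n this] show ?thesis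
    by (rule has_derivative_eq_rhs)
       (simp add: fun_eq_iff inner_diff_right power2_eq_square power4_eq_xxxx diff_divide_distrib mult_ac)
qed

definition wedge_potential ::
    "real \<Rightarrow> (real \<Rightarrow> real) \<Rightarrow> (real \<times> real \<Rightarrow> real) \<Rightarrow> real \<times> real \<Rightarrow> real" where
  "wedge_potential k \<theta> f x = (f x)\<^sup>2 * (k * cot (k * wedge_angle \<theta> x)) / (norm x)\<^sup>2"

definition wedge_potential_gradient :: "real \<Rightarrow> (real \<Rightarrow> real) \<Rightarrow> (real \<times> real \<Rightarrow> real)
    \<Rightarrow> (real \<times> real \<Rightarrow> real \<times> real) \<Rightarrow> real \<times> real \<Rightarrow> real \<times> real" where
  "wedge_potential_gradient k \<theta> f G x =
     (1 / (norm x)\<^sup>2) *\<^sub>R ((2 * f x * (k * cot (k * wedge_angle \<theta> x))) *\<^sub>R G x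
        - (f x * k / sin (k * wedge_angle \<theta> x))\<^sup>2 *\<^sub>R wedge_angle_gradient \<theta> x)
     - (2 * ((f x)\<^sup>2 * (k * cot (k * wedge_angle \<theta> x))) / (norm x) ^ 4) *\<^sub>R x"

lemma wedge_potential_has_derivative:
  assumes f: "(f has_derivative (\<lambda>v. inner v (G x))) (at x)"
    and \<theta>: "\<theta> differentiable (at (norm x))" and nonpos: "unwound \<theta> x \<notin> \<real>\<^sub>\<le>\<^sub>0"
    and sin: "sin (k * wedge_angle \<theta> x) \<noteq> 0"
  shows "(wedge_potential k \<theta> f has_derivative (\<lambda>v. inner v (wedge_potential_gradient k \<theta> f G x))) (at x)"
proof -
  have x: "x \<noteq> 0" using nonpos by auto
  have cot: "((\<lambda>x. k * cot (k * wedge_angle \<theta> x)) has_derivative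
      (\<lambda>v. inner v (wedge_angle_gradient \<theta> x) * - (k / sin (k * wedge_angle \<theta> x))\<^sup>2)) (at x)"
    by (rule DERIV_compose_FDERIV[OF scaled_cot_has_derivative[OF sin] wedge_angle_has_derivative[OF \<theta> nonpos]])
  have "((\<lambda>x. (f x)\<^sup>2 * (k * cot (k * wedge_angle \<theta> x))) has_derivative
      (\<lambda>v. inner v ((2 * f x * (k * cot (k * wedge_angle \<theta> x))) *\<^sub>R G x
        - (f x * k / sin (k * wedge_angle \<theta> x))\<^sup>2 *\<^sub>R wedge_angle_gradient \<theta> x))) (at x)"
    by (rule derivative_eq_intros f cot refl)+
       (use sin in \<open>simp add: fun_eq_iff inner_diff_right power_divide power_mult_distrib field_simps\<close>)
  from has_derivative_divide_norm_power2[OF this x] show ?thesis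
    unfolding wedge_potential_def[abs_def] wedge_potential_gradient_def .
qed

lemma isCont_wedge_potential_gradient:
  assumes f: "isCont f x" and G: "isCont G x"
    and \<theta>: "\<theta> differentiable (at (norm x))" "isCont (deriv \<theta>) (norm x)"
    and nonpos: "unwound \<theta> x \<notin> \<real>\<^sub>\<le>\<^sub>0" and sin: "sin (k * wedge_angle \<theta> x) \<noteq> 0"
  shows "isCont (wedge_potential_gradient k \<theta> f G) x"
proof -
  have x: "x \<noteq> 0" using nonpos by auto
  have angle: "isCont (wedge_angle \<theta>) x"
    using has_derivative_continuous[OF wedge_angle_has_derivative[OF \<theta>(1) nonpos]] .
  have cot: "isCont (\<lambda>x. cot (k * wedge_angle \<theta> x)) x"
    by (rule isCont_o2[OF _ isCont_cot]) (use angle sin in \<open>auto intro!: continuous_intros\<close>)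
  have "isCont (\<lambda>x. deriv \<theta> (norm x)) x"
    by (rule isCont_o2[where f = norm and a = x and g = "deriv \<theta>", OF _ \<theta>(2)]) (intro continuous_intros)
  then have gradient: "isCont (wedge_angle_gradient \<theta>) x"
    unfolding wedge_angle_gradient_def[abs_def] rot90_def by (intro continuous_intros) (auto simp: x)
  show ?thesis
    unfolding wedge_potential_gradient_def[abs_def]
    by (intro continuous_intros f G angle cot gradient) (auto simp: x sin)
qed

lemma inner_wedge_potential_gradient_rot90_le:
  assumes x: "x \<noteq> 0" and sin: "sin (k * wedge_angle \<theta> x) \<noteq> 0"
  shows "inner (wedge_potential_gradient k \<theta> f G x) (rot90 x) + k\<^sup>2 * ((f x)\<^sup>2 / (norm x)\<^sup>2)
         \<le> (norm (G x))\<^sup>2"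
proof -
  let ?C = "k * cot (k * wedge_angle \<theta> x)" and ?D = "- (k / sin (k * wedge_angle \<theta> x))\<^sup>2"
  have "inner (wedge_potential_gradient k \<theta> f G x) (rot90 x)
      = (2 * f x * ?C * inner (G x) (rot90 x) + (f x)\<^sup>2 * ?D) / (norm x)\<^sup>2"
    using x by (simp add: wedge_potential_gradient_def inner_diff_left inner_wedge_angle_gradient_rot90)
      (simp add: power_divide power_mult_distrib field_simps)
  moreover have "?D + ?C\<^sup>2 = - k\<^sup>2" by (rule scaled_cot_riccati[OF sin])
  ultimately show ?thesis
    using hardy_pointwise_bound[OF x, of ?D ?C k "f x" "G x"] by simp
qed

lemma set_nn_integral_eq_integral:
  assumes "integrable M f" "\<And>x. 0 \<le> f x" "\<And>x. x \<notin> S \<Longrightarrow> f x = 0"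
  shows "(\<integral>\<^sup>+ x \<in> S. ennreal (f x) \<partial>M) = ennreal (integral\<^sup>L M f)"
proof -
  have "(\<integral>\<^sup>+ x \<in> S. ennreal (f x) \<partial>M) = (\<integral>\<^sup>+ x. ennreal (f x) \<partial>M)"
    using assms(3) by (intro nn_integral_cong) (auto simp: indicator_def)
  also have "\<dots> = ennreal (integral\<^sup>L M f)"
    by (rule nn_integral_eq_integral) (use assms in auto)
  finally show ?thesis .
qed

lemma integral_cmult_le_of_le_add:
  fixes P F H :: "'a \<Rightarrow> real"
  assumes "integrable M P" "integral\<^sup>L M P = 0" "integrable M F" "integrable M H"
    and "\<And>x. P x + c * F x \<le> H x"
  shows "c * integral\<^sup>L M F \<le> integral\<^sup>L M H"
proof -
  have "integral\<^sup>L M (\<lambda>x. P x + c * F x) \<le> integral\<^sup>L M H"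
    using assms by (intro integral_mono Bochner_Integration.integrable_add integrable_mult_right)
  moreover have "integral\<^sup>L M (\<lambda>x. P x + c * F x) = integral\<^sup>L M P + c * integral\<^sup>L M F"
    using assms by (simp add: Bochner_Integration.integral_add integral_mult_right_zero)
  ultimately show ?thesis using assms(2) by simp
qed

context
  fixes a :: real and \<theta> :: "real \<Rightarrow> real"
    and f :: "real \<times> real \<Rightarrow> real" and G :: "real \<times> real \<Rightarrow> real \<times> real" and K :: "(real \<times> real) set"
  assumes a: "0 < a" "a \<le> 1"
    and \<theta>_diff: "\<forall>r>0. \<theta> differentiable (at r)" and \<theta>_cont: "continuous_on {0<..} (deriv \<theta>)"
    and f: "\<And>x. (f has_derivative (\<lambda>v. inner v (G x))) (at x)" and G: "continuous_on UNIV G"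
    and K: "compact K" "K \<subseteq> curved_wedge a \<theta>" and supp: "\<And>x. x \<notin> K \<Longrightarrow> f x = 0"
begin

lemma support_regular:
  assumes "x \<in> K"
  shows "x \<noteq> 0" "unwound \<theta> x \<notin> \<real>\<^sub>\<le>\<^sub>0" "sin (1 / (2 * a) * wedge_angle \<theta> x) \<noteq> 0"
    "\<theta> differentiable (at (norm x))" "isCont (deriv \<theta>) (norm x)"
proof -
  have x: "x \<in> curved_wedge a \<theta>" using K(2) assms by blast
  then show "unwound \<theta> x \<notin> \<real>\<^sub>\<le>\<^sub>0" "sin (1 / (2 * a) * wedge_angle \<theta> x) \<noteq> 0"
    using unwound_curved_wedge[OF a(2)] sin_wedge_angle_ne_0[OF a] by auto
  then show "x \<noteq> 0" by auto
  then show "\<theta> differentiable (at (norm x))" "isCont (deriv \<theta>) (norm x)"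
    using \<theta>_diff \<theta>_cont by (auto simp: continuous_on_eq_continuous_at)
qed

lemma wedge_potential_gradient_outside:
  "x \<notin> K \<Longrightarrow> wedge_potential_gradient k \<theta> f G x = 0"
  using supp by (simp add: wedge_potential_gradient_def)

lemma wedge_potential_has_derivative_everywhere:
  "(wedge_potential (1 / (2 * a)) \<theta> f has_derivative
     (\<lambda>v. inner v (wedge_potential_gradient (1 / (2 * a)) \<theta> f G x))) (at x)"
proof (cases "x \<in> K")
  case True
  then show ?thesis by (intro wedge_potential_has_derivative f support_regular)
next
  case False
  then show ?thesis
    using has_derivative_zero_outside[OF compact_imp_closed[OF K(1)] False,
        of "wedge_potential (1 / (2 * a)) \<theta> f"]
    by (simp add: wedge_potential_gradient_outside wedge_potential_def supp)
qed

lemma continuous_on_wedge_potential_gradient: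
  "continuous_on UNIV (wedge_potential_gradient (1 / (2 * a)) \<theta> f G)"
proof (intro continuous_at_imp_continuous_on ballI)
  fix x show "isCont (wedge_potential_gradient (1 / (2 * a)) \<theta> f G) x"
  proof (cases "x \<in> K")
    case True
    have "isCont G x" using G continuous_on_eq_continuous_at[OF open_UNIV, of G] by blast
    with True show ?thesis
      by (intro isCont_wedge_potential_gradient[OF has_derivative_continuous[OF f]] support_regular)
  next
    case False
    then show ?thesis
      by (rule isCont_zero_outside[OF compact_imp_closed[OF K(1)] _ wedge_potential_gradient_outside])
  qed
qed

lemma hardy_inequality_compact_support:
  "ennreal (1 / (4 * a\<^sup>2)) * (\<integral>\<^sup>+ x \<in> curved_wedge a \<theta>. ennreal ((f x)\<^sup>2 / (norm x)\<^sup>2) \<partial>lborel)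
   \<le> (\<integral>\<^sup>+ x \<in> curved_wedge a \<theta>. ennreal ((norm (G x))\<^sup>2) \<partial>lborel)"
proof -
  define k where "k = 1 / (2 * a)"
  have closed: "closed K" using K(1) by (rule compact_imp_closed)
  have G0: "G x = 0" if "x \<notin> K" for x
    using gradient_zero_outside[OF f closed that supp] .
  have "wedge_potential k \<theta> f x = 0" if "x \<notin> K" for x
    using supp[OF that] by (simp add: wedge_potential_def)
  note rot = integral_inner_gradient_rot90_eq_0[OF wedge_potential_has_derivative_everywhere
      continuous_on_wedge_potential_gradient K(1), folded k_def, OF this]
  have "inner (wedge_potential_gradient k \<theta> f G x) (rot90 x) + k\<^sup>2 * ((f x)\<^sup>2 / (norm x)\<^sup>2)
      \<le> (norm (G x))\<^sup>2" for x
  proof (cases "x \<in> K")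
    case True
    then show ?thesis
      unfolding k_def by (intro inner_wedge_potential_gradient_rot90_le support_regular)
  qed (simp add: wedge_potential_gradient_outside supp)
  moreover have int_f: "integrable lborel (\<lambda>x. (f x)\<^sup>2 / (norm x)\<^sup>2)"
  proof (rule integrable_continuous_compact_support[OF continuous_at_imp_continuous_on K(1)])
    show "\<forall>x\<in>UNIV. isCont (\<lambda>x. (f x)\<^sup>2 / (norm x)\<^sup>2) x"
    proof
      fix x show "isCont (\<lambda>x. (f x)\<^sup>2 / (norm x)\<^sup>2) x"
      proof (cases "x \<in> K")
        case True
        then show ?thesis
          using support_regular(1)[OF True]
          by (intro continuous_intros has_derivative_continuous[OF f]) simp
      qed (rule isCont_zero_outside[OF closed], simp_all add: supp)
    qed
  qed (simp add: supp)
  moreover have int_G: "integrable lborel (\<lambda>x. (norm (G x))\<^sup>2)"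
    by (rule integrable_continuous_compact_support[OF _ K(1)]) (auto intro!: continuous_intros G simp: G0)
  ultimately have bochner: "k\<^sup>2 * integral\<^sup>L lborel (\<lambda>x. (f x)\<^sup>2 / (norm x)\<^sup>2)
      \<le> integral\<^sup>L lborel (\<lambda>x. (norm (G x))\<^sup>2)"
    using rot by (intro integral_cmult_le_of_le_add)
  have outside: "x \<notin> curved_wedge a \<theta> \<Longrightarrow> x \<notin> K" for x using K(2) by blast
  have "ennreal (1 / (4 * a\<^sup>2)) * ennreal (integral\<^sup>L lborel (\<lambda>x. (f x)\<^sup>2 / (norm x)\<^sup>2))
      = ennreal (k\<^sup>2 * integral\<^sup>L lborel (\<lambda>x. (f x)\<^sup>2 / (norm x)\<^sup>2))"
  proof -
    have "k\<^sup>2 = 1 / (4 * a\<^sup>2)" by (simp add: k_def power_divide power_mult_distrib)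
    then show ?thesis by (simp only:) (rule ennreal_mult[symmetric], simp_all)
  qed
  also have "\<dots> \<le> ennreal (integral\<^sup>L lborel (\<lambda>x. (norm (G x))\<^sup>2))"
    by (rule ennreal_leI[OF bochner])
  also have "\<dots> = (\<integral>\<^sup>+ x \<in> curved_wedge a \<theta>. ennreal ((norm (G x))\<^sup>2) \<partial>lborel)"
    by (rule set_nn_integral_eq_integral[symmetric]) (simp_all add: int_G G0 outside)
  finally show ?thesis
    by (subst set_nn_integral_eq_integral) (simp_all add: int_f supp outside)
qed

end

section \<open>Passing to the closure of the test functions\<close>

lemma power2_le_eps_split:
  fixes e a b c :: real
  assumes e: "0 < e" and "0 \<le> a" "0 \<le> b" "\<bar>c\<bar> \<le> a + b"
  shows "c\<^sup>2 \<le> (1 + e) * a\<^sup>2 + (1 + 1 / e) * b\<^sup>2"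
proof -
  have "\<bar>c\<bar>\<^sup>2 \<le> (a + b)\<^sup>2" using assms by (intro power_mono) auto
  moreover have "2 * a * b \<le> e * a\<^sup>2 + b\<^sup>2 / e"
  proof -
    have "0 \<le> (e * a - b)\<^sup>2 / e" using e by simp
    then show ?thesis using e by (simp add: power2_eq_square field_simps)
  qed
  ultimately show ?thesis by (simp add: power2_eq_square algebra_simps)
qed

lemma ennreal_le_of_le_mult_tendsto_1:
  fixes X A :: ennreal
  assumes le: "\<And>j. X \<le> ennreal (r j) * A" and r: "r \<longlonglongrightarrow> 1"
  shows "X \<le> A"
proof (cases "A = top")
  case False
  have "(\<lambda>j. ennreal (r j)) \<longlonglongrightarrow> ennreal 1"
    using r by (rule tendsto_ennrealI)
  then have "(\<lambda>j. A * ennreal (r j)) \<longlonglongrightarrow> A * 1"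
    using False by (intro ennreal_tendsto_cmult) (auto simp: top.not_eq_extremum)
  then have "(\<lambda>j. ennreal (r j) * A) \<longlonglongrightarrow> A"
    by (simp add: mult.commute)
  then show ?thesis
    using le by (intro tendsto_le[OF trivial_limit_sequentially _ tendsto_const]) auto
qed simp

lemma ennreal_le_of_le_add_tendsto_0:
  fixes X Y :: ennreal
  assumes "\<And>n. X \<le> Y + Z n" "Z \<longlonglongrightarrow> 0"
  shows "X \<le> Y"
proof -
  have "(\<lambda>n. Y + Z n) \<longlonglongrightarrow> Y + 0" by (intro tendsto_intros assms(2))
  then show ?thesis
    using assms(1) by (intro tendsto_le[OF trivial_limit_sequentially _ tendsto_const]) auto
qed

lemma set_nn_integral_norm_triangle_eps:
  fixes f g h :: "'a \<Rightarrow> 'b::euclidean_space" and v :: "'a \<Rightarrow> real"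
  assumes [measurable]: "S \<in> sets M" "g \<in> borel_measurable M" "h \<in> borel_measurable M"
    "v \<in> borel_measurable M"
    and e: "0 < e" and v: "\<And>x. 0 \<le> v x"
    and triangle: "\<And>x. x \<in> S \<Longrightarrow> norm (f x) \<le> norm (g x) + norm (h x)"
  shows "(\<integral>\<^sup>+ x \<in> S. ennreal ((norm (f x))\<^sup>2 * v x) \<partial>M)
         \<le> ennreal (1 + e) * (\<integral>\<^sup>+ x \<in> S. ennreal ((norm (g x))\<^sup>2 * v x) \<partial>M)
           + ennreal (1 + 1 / e) * (\<integral>\<^sup>+ x \<in> S. ennreal ((norm (h x))\<^sup>2 * v x) \<partial>M)"
proof -
  have "(\<integral>\<^sup>+ x \<in> S. ennreal ((norm (f x))\<^sup>2 * v x) \<partial>M)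
      \<le> (\<integral>\<^sup>+ x. ennreal (1 + e) * (ennreal ((norm (g x))\<^sup>2 * v x) * indicator S x)
               + ennreal (1 + 1 / e) * (ennreal ((norm (h x))\<^sup>2 * v x) * indicator S x) \<partial>M)"
  proof (intro nn_integral_mono)
    fix x
    show "ennreal ((norm (f x))\<^sup>2 * v x) * indicator S x
        \<le> ennreal (1 + e) * (ennreal ((norm (g x))\<^sup>2 * v x) * indicator S x)
          + ennreal (1 + 1 / e) * (ennreal ((norm (h x))\<^sup>2 * v x) * indicator S x)"
    proof (cases "x \<in> S")
      case True
      have "(norm (f x))\<^sup>2 * v x \<le> ((1 + e) * (norm (g x))\<^sup>2 + (1 + 1 / e) * (norm (h x))\<^sup>2) * v x"
        using power2_le_eps_split[OF e norm_ge_zero norm_ge_zero, of "norm (f x)"] triangle[OF True] v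
        by (intro mult_right_mono) auto
      then have "ennreal ((norm (f x))\<^sup>2 * v x)
          \<le> ennreal ((1 + e) * ((norm (g x))\<^sup>2 * v x) + (1 + 1 / e) * ((norm (h x))\<^sup>2 * v x))"
        by (intro ennreal_leI) (simp add: algebra_simps)
      then show ?thesis using True e v by (simp add: ennreal_plus ennreal_mult)
    qed simp
  qed
  also have "\<dots> = ennreal (1 + e) * (\<integral>\<^sup>+ x \<in> S. ennreal ((norm (g x))\<^sup>2 * v x) \<partial>M)
      + ennreal (1 + 1 / e) * (\<integral>\<^sup>+ x \<in> S. ennreal ((norm (h x))\<^sup>2 * v x) \<partial>M)"
    by (simp add: nn_integral_add nn_integral_cmult)
  finally show ?thesis .
qed

lemma set_nn_integral_mono_set:
  "S \<subseteq> T \<Longrightarrow> (\<integral>\<^sup>+ x \<in> S. f x \<partial>M) \<le> (\<integral>\<^sup>+ x \<in> T. f x \<partial>M)"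
  by (intro nn_integral_mono) (auto simp: indicator_def)

lemma set_nn_integral_split_bounded_weight:
  fixes w u \<phi> :: "'a \<Rightarrow> real"
  assumes [measurable]: "S \<in> sets M" "\<Omega> \<in> sets M" "w \<in> borel_measurable M"
    "u \<in> borel_measurable M" "\<phi> \<in> borel_measurable M"
    and S: "S \<subseteq> \<Omega>" and w: "\<And>x. 0 \<le> w x" "\<And>x. x \<in> S \<Longrightarrow> w x \<le> m" and e: "0 < e"
  shows "(\<integral>\<^sup>+ x \<in> S. ennreal ((u x)\<^sup>2 * w x) \<partial>M)
         \<le> ennreal (1 + e) * (\<integral>\<^sup>+ x \<in> \<Omega>. ennreal ((\<phi> x)\<^sup>2 * w x) \<partial>M)
           + ennreal (1 + 1 / e) * (ennreal m * (\<integral>\<^sup>+ x. ennreal ((\<phi> x - u x)\<^sup>2) \<partial>M))"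
proof -
  have "(\<integral>\<^sup>+ x \<in> S. ennreal ((u x)\<^sup>2 * w x) \<partial>M)
      \<le> ennreal (1 + e) * (\<integral>\<^sup>+ x \<in> S. ennreal ((\<phi> x)\<^sup>2 * w x) \<partial>M)
        + ennreal (1 + 1 / e) * (\<integral>\<^sup>+ x \<in> S. ennreal ((\<phi> x - u x)\<^sup>2 * w x) \<partial>M)"
    using set_nn_integral_norm_triangle_eps[of S M \<phi> "\<lambda>x. \<phi> x - u x" w e u] e w(1) by simp
  also have "(\<integral>\<^sup>+ x \<in> S. ennreal ((\<phi> x)\<^sup>2 * w x) \<partial>M)
      \<le> (\<integral>\<^sup>+ x \<in> \<Omega>. ennreal ((\<phi> x)\<^sup>2 * w x) \<partial>M)"
    by (rule set_nn_integral_mono_set[OF S])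
  also have "(\<integral>\<^sup>+ x \<in> S. ennreal ((\<phi> x - u x)\<^sup>2 * w x) \<partial>M)
      \<le> ennreal m * (\<integral>\<^sup>+ x. ennreal ((\<phi> x - u x)\<^sup>2) \<partial>M)"
  proof (subst nn_integral_cmult[symmetric], measurable, intro nn_integral_mono)
    fix x
    have "ennreal ((\<phi> x - u x)\<^sup>2) * ennreal (w x) \<le> ennreal ((\<phi> x - u x)\<^sup>2) * ennreal m"
      if "x \<in> S" using that w by (intro mult_left_mono ennreal_leI) auto
    then show "ennreal ((\<phi> x - u x)\<^sup>2 * w x) * indicator S x \<le> ennreal m * ennreal ((\<phi> x - u x)\<^sup>2)"
      using w(1)[of x] by (auto simp: indicator_def ennreal_mult'' mult.commute)
  qed
  finally show ?thesis by (simp add: mult_left_mono add_mono)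
qed

(* Instead of Minkowski's inequality, split (a + b)^2 <= (1 + e) a^2 + (1 + 1/e) b^2 and let
   e tend to 0 at the end. *)
lemma weighted_L2_inequality_limit_bounded:
  fixes w u :: "'a \<Rightarrow> real" and g :: "'a \<Rightarrow> 'b::euclidean_space"
    and \<phi> :: "nat \<Rightarrow> 'a \<Rightarrow> real" and G :: "nat \<Rightarrow> 'a \<Rightarrow> 'b" and c :: ennreal
  assumes [measurable]: "S \<in> sets M" "\<Omega> \<in> sets M" "w \<in> borel_measurable M"
    "u \<in> borel_measurable M" "g \<in> borel_measurable M"
    "\<And>n. \<phi> n \<in> borel_measurable M" "\<And>n. G n \<in> borel_measurable M"
    and S: "S \<subseteq> \<Omega>" and w: "\<And>x. 0 \<le> w x" "\<And>x. x \<in> S \<Longrightarrow> w x \<le> m" and c: "c < top"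
    and ineq: "\<And>n. c * (\<integral>\<^sup>+ x \<in> \<Omega>. ennreal ((\<phi> n x)\<^sup>2 * w x) \<partial>M)
                   \<le> (\<integral>\<^sup>+ x \<in> \<Omega>. ennreal ((norm (G n x))\<^sup>2) \<partial>M)"
    and lim_u: "(\<lambda>n. \<integral>\<^sup>+ x. ennreal ((\<phi> n x - u x)\<^sup>2) \<partial>M) \<longlonglongrightarrow> 0"
    and lim_g: "(\<lambda>n. \<integral>\<^sup>+ x. ennreal ((norm (G n x - g x))\<^sup>2) \<partial>M) \<longlonglongrightarrow> 0"
  shows "c * (\<integral>\<^sup>+ x \<in> S. ennreal ((u x)\<^sup>2 * w x) \<partial>M)
         \<le> (\<integral>\<^sup>+ x \<in> \<Omega>. ennreal ((norm (g x))\<^sup>2) \<partial>M)"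
    (is "c * ?B \<le> ?A")
proof (rule ennreal_le_of_le_mult_tendsto_1)
  show "(\<lambda>j. (1 + 1 / real (Suc j))\<^sup>2) \<longlonglongrightarrow> 1"
    using tendsto_power[OF tendsto_add[OF tendsto_const LIMSEQ_inverse_real_of_nat], of 1 2]
    by (simp add: inverse_eq_divide)
next
  fix j
  define e where "e = 1 / real (Suc j)"
  define E where "E = ennreal (1 + e)"
  define R where "R = ennreal (1 + 1 / e)"
  define U where "U n = (\<integral>\<^sup>+ x. ennreal ((\<phi> n x - u x)\<^sup>2) \<partial>M)" for n
  define V where "V n = (\<integral>\<^sup>+ x. ennreal ((norm (G n x - g x))\<^sup>2) \<partial>M)" for n
  have e: "0 < e" by (simp add: e_def)
  have u_split:
    "?B \<le> E * (\<integral>\<^sup>+ x \<in> \<Omega>. ennreal ((\<phi> n x)\<^sup>2 * w x) \<partial>M) + R * (ennreal m * U n)" for n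
    unfolding E_def R_def U_def by (rule set_nn_integral_split_bounded_weight[OF assms(1-4,6) S w e])
  have g_split: "(\<integral>\<^sup>+ x \<in> \<Omega>. ennreal ((norm (G n x))\<^sup>2) \<partial>M) \<le> E * ?A + R * V n" for n
  proof -
    have "(\<integral>\<^sup>+ x \<in> \<Omega>. ennreal ((norm (G n x))\<^sup>2) \<partial>M)
        \<le> E * ?A + R * (\<integral>\<^sup>+ x \<in> \<Omega>. ennreal ((norm (G n x - g x))\<^sup>2) \<partial>M)"
      using set_nn_integral_norm_triangle_eps[of \<Omega> M g "\<lambda>x. G n x - g x" "\<lambda>_. 1" e "G n"] e
      by (simp add: E_def R_def norm_triangle_sub)
    also have "(\<integral>\<^sup>+ x \<in> \<Omega>. ennreal ((norm (G n x - g x))\<^sup>2) \<partial>M) \<le> V n"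
      unfolding V_def by (intro nn_integral_mono) (auto simp: indicator_def)
    finally show ?thesis by (simp add: mult_left_mono add_mono)
  qed
  have EE: "E * E = ennreal ((1 + 1 / real (Suc j))\<^sup>2)"
    using e by (simp add: E_def e_def power2_eq_square ennreal_mult)
  show "c * ?B \<le> ennreal ((1 + 1 / real (Suc j))\<^sup>2) * ?A"
  proof (rule ennreal_le_of_le_add_tendsto_0)
    fix n
    have "c * ?B
        \<le> c * (E * (\<integral>\<^sup>+ x \<in> \<Omega>. ennreal ((\<phi> n x)\<^sup>2 * w x) \<partial>M) + R * (ennreal m * U n))"
      by (intro mult_left_mono u_split) simp
    also have "\<dots>
        \<le> E * (\<integral>\<^sup>+ x \<in> \<Omega>. ennreal ((norm (G n x))\<^sup>2) \<partial>M) + c * R * ennreal m * U n"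
      using mult_left_mono[OF ineq[of n], of E] by (simp add: distrib_left mult_ac)
    also have "\<dots> \<le> E * (E * ?A + R * V n) + c * R * ennreal m * U n"
      by (intro add_mono mult_left_mono g_split) simp_all
    finally show "c * ?B \<le> ennreal ((1 + 1 / real (Suc j))\<^sup>2) * ?A + (E * R * V n + c * R * ennreal m * U n)"
      unfolding EE[symmetric] by (simp add: distrib_left mult_ac add_ac)
  next
    have "(\<lambda>n. E * R * V n + c * R * ennreal m * U n) \<longlonglongrightarrow> E * R * 0 + c * R * ennreal m * 0"
      using lim_g lim_u c unfolding U_def V_def
      by (intro tendsto_add ennreal_tendsto_cmult) (auto simp: E_def R_def ennreal_mult_less_top)
    then show "(\<lambda>n. E * R * V n + c * R * ennreal m * U n) \<longlonglongrightarrow> 0" by simp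
  qed
qed

lemma weighted_L2_inequality_limit:
  fixes w u :: "'a \<Rightarrow> real" and g :: "'a \<Rightarrow> 'b::euclidean_space"
    and \<phi> :: "nat \<Rightarrow> 'a \<Rightarrow> real" and G :: "nat \<Rightarrow> 'a \<Rightarrow> 'b" and c :: ennreal
  assumes [measurable]: "\<Omega> \<in> sets M" "w \<in> borel_measurable M"
    "u \<in> borel_measurable M" "g \<in> borel_measurable M"
    "\<And>n. \<phi> n \<in> borel_measurable M" "\<And>n. G n \<in> borel_measurable M"
    and w: "\<And>x. 0 \<le> w x" and c: "c < top"
    and ineq: "\<And>n. c * (\<integral>\<^sup>+ x \<in> \<Omega>. ennreal ((\<phi> n x)\<^sup>2 * w x) \<partial>M)
                   \<le> (\<integral>\<^sup>+ x \<in> \<Omega>. ennreal ((norm (G n x))\<^sup>2) \<partial>M)"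
    and lim_u: "(\<lambda>n. \<integral>\<^sup>+ x. ennreal ((\<phi> n x - u x)\<^sup>2) \<partial>M) \<longlonglongrightarrow> 0"
    and lim_g: "(\<lambda>n. \<integral>\<^sup>+ x. ennreal ((norm (G n x - g x))\<^sup>2) \<partial>M) \<longlonglongrightarrow> 0"
  shows "c * (\<integral>\<^sup>+ x \<in> \<Omega>. ennreal ((u x)\<^sup>2 * w x) \<partial>M)
         \<le> (\<integral>\<^sup>+ x \<in> \<Omega>. ennreal ((norm (g x))\<^sup>2) \<partial>M)"
    (is "c * ?B \<le> ?A")
proof -
  define F where "F m x = ennreal ((u x)\<^sup>2 * w x) * indicator (\<Omega> \<inter> {x. w x \<le> real m}) x" for m x
  have "incseq F"
    by (intro monoI le_funI) (auto simp: F_def indicator_def order_trans)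
  have "(SUP m. F m x) = ennreal ((u x)\<^sup>2 * w x) * indicator \<Omega> x" for x
  proof (rule antisym)
    show "(SUP m. F m x) \<le> ennreal ((u x)\<^sup>2 * w x) * indicator \<Omega> x"
      by (intro SUP_least) (auto simp: F_def indicator_def)
    have "w x \<le> real (nat \<lceil>w x\<rceil>)" by linarith
    then show "ennreal ((u x)\<^sup>2 * w x) * indicator \<Omega> x \<le> (SUP m. F m x)"
      by (intro SUP_upper2[of "nat \<lceil>w x\<rceil>"]) (auto simp: F_def indicator_def)
  qed
  then have "?B = (\<integral>\<^sup>+ x. (SUP m. F m x) \<partial>M)"
    by simp
  also have "\<dots> = (SUP m. \<integral>\<^sup>+ x. F m x \<partial>M)"
    using \<open>incseq F\<close> by (rule nn_integral_monotone_convergence_SUP) (unfold F_def, measurable)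
  finally have "c * ?B = (SUP m. c * (\<integral>\<^sup>+ x. F m x \<partial>M))"
    by (simp add: SUP_mult_left_ennreal)
  also have "\<dots> \<le> ?A"
  proof (intro SUP_least)
    fix m
    have "\<Omega> \<inter> {x. w x \<le> real m} = {x \<in> space M. x \<in> \<Omega> \<and> w x \<le> real m}"
      using sets.sets_into_space[OF assms(1)] by auto
    also have "\<dots> \<in> sets M" by measurable
    finally show "c * (\<integral>\<^sup>+ x. F m x \<partial>M) \<le> ?A"
      unfolding F_def
      by (rule weighted_L2_inequality_limit_bounded[OF _ assms(1-6) _ w _ c ineq lim_u lim_g]) auto
  qed
  finally show ?thesis .
qed

lemma continuous_on_gradient_smooth2:
  assumes "smooth2 \<phi>" "\<And>x. GDERIV \<phi> x :> G x"
  shows "continuous_on UNIV G"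
proof -
  obtain D where D0: "D 0 0 = \<phi>"
    and D: "\<And>i j x. (D i j has_derivative (\<lambda>h. fst h * D (Suc i) j x + snd h * D i (Suc j) x)) (at x)"
    using assms(1) unfolding smooth2_def by blast
  have "G x = (D 1 0 x, D 0 1 x)" for x
  proof -
    have "(\<lambda>h. inner h (G x)) = (\<lambda>h. fst h * D 1 0 x + snd h * D 0 1 x)"
      using has_derivative_unique[OF assms(2)[unfolded gderiv_def] D[of 0 0, unfolded D0]] by simp
    from fun_cong[OF this, of "(1, 0)"] fun_cong[OF this, of "(0, 1)"] show ?thesis
      by (cases "G x") (simp add: inner_prod_def)
  qed
  moreover have "continuous_on UNIV (D i j)" for i j
    using D[of i j] by (meson continuous_at_imp_continuous_on has_derivative_continuous)
  ultimately show ?thesis by (simp add: continuous_on_Pair)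
qed

lemma hardy_inequality_test_fun:
  assumes a: "0 < a" "a \<le> 1"
    and \<theta>: "\<forall>r>0. \<theta> differentiable (at r)" "continuous_on {0<..} (deriv \<theta>)"
    and \<phi>: "test_fun (curved_wedge a \<theta>) \<phi>" and G: "\<And>x. GDERIV \<phi> x :> G x"
  shows "ennreal (1 / (4 * a\<^sup>2)) * (\<integral>\<^sup>+ x \<in> curved_wedge a \<theta>. ennreal ((\<phi> x)\<^sup>2 / (norm x)\<^sup>2) \<partial>lborel)
         \<le> (\<integral>\<^sup>+ x \<in> curved_wedge a \<theta>. ennreal ((norm (G x))\<^sup>2) \<partial>lborel)"
proof (rule hardy_inequality_compact_support[OF a \<theta>])
  show "(\<phi> has_derivative (\<lambda>v. inner v (G x))) (at x)" for x
    using G by (simp add: gderiv_def)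
  show "continuous_on UNIV G"
    using \<phi> unfolding test_fun_def by (blast intro: continuous_on_gradient_smooth2 G)
  show "compact (closure {x. \<phi> x \<noteq> 0})" "closure {x. \<phi> x \<noteq> 0} \<subseteq> curved_wedge a \<theta>"
    using \<phi> by (auto simp: test_fun_def)
  show "x \<notin> closure {x. \<phi> x \<noteq> 0} \<Longrightarrow> \<phi> x = 0" for x
    using closure_subset[of "{x. \<phi> x \<noteq> 0}"] by blast
qed

theorem mainTheorem12:
  fixes a :: real and \<theta> :: "real \<Rightarrow> real"
    and u :: "real \<times> real \<Rightarrow> real" and g :: "real \<times> real \<Rightarrow> real \<times> real"
  assumes "0 < a" "a \<le> 1"
    and "\<forall>r>0. \<theta> differentiable (at r)"
    and "continuous_on {0<..} (deriv \<theta>)"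
    and "\<exists>M. \<forall>r>0. \<bar>r * deriv \<theta> r\<bar> \<le> M"
    and "H01_grad (curved_wedge a \<theta>) u g"
  shows "(\<integral>\<^sup>+ x \<in> curved_wedge a \<theta>. ennreal ((norm (g x))\<^sup>2) \<partial>lborel)
         \<ge> ennreal (1 / (4 * a\<^sup>2)) *
           (\<integral>\<^sup>+ x \<in> curved_wedge a \<theta>. ennreal ((u x)\<^sup>2 / (norm x)\<^sup>2) \<partial>lborel)"
proof -
  obtain \<phi> G where \<phi>: "\<And>n. test_fun (curved_wedge a \<theta>) (\<phi> n)" and G: "\<And>n x. GDERIV (\<phi> n) x :> G n x"
    and lim_u: "(\<lambda>n. \<integral>\<^sup>+ x. ennreal ((\<phi> n x - u x)\<^sup>2) \<partial>lborel) \<longlonglongrightarrow> 0"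
    and lim_g: "(\<lambda>n. \<integral>\<^sup>+ x. ennreal ((norm (G n x - g x))\<^sup>2) \<partial>lborel) \<longlonglongrightarrow> 0"
    and [measurable]: "u \<in> borel_measurable lborel" "g \<in> borel_measurable lborel"
    using assms(6) unfolding H01_grad_def by blast
  have "continuous_on UNIV (\<phi> n)" for n
    using G[of n] unfolding gderiv_def
    by (intro continuous_at_imp_continuous_on ballI) (rule has_derivative_continuous)
  moreover have "continuous_on UNIV (G n)" for n
    using \<phi>[of n] G[of n] by (intro continuous_on_gradient_smooth2) (auto simp: test_fun_def)
  ultimately have [measurable]: "\<phi> n \<in> borel_measurable borel" "G n \<in> borel_measurable borel" for n
    by (simp_all add: borel_measurable_continuous_onI)
  have "continuous_on {0<..} \<theta>"
    using assms(3) by (intro continuous_at_imp_continuous_on ballI differentiable_imp_continuous_within) auto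
  then have wedge_sets: "curved_wedge a \<theta> \<in> sets lborel"
    using open_curved_wedge[OF assms(2)] by simp
  have "ennreal (1 / (4 * a\<^sup>2)) * (\<integral>\<^sup>+ x \<in> curved_wedge a \<theta>. ennreal ((u x)\<^sup>2 * (1 / (norm x)\<^sup>2)) \<partial>lborel)
      \<le> (\<integral>\<^sup>+ x \<in> curved_wedge a \<theta>. ennreal ((norm (g x))\<^sup>2) \<partial>lborel)"
    by (rule weighted_L2_inequality_limit[where \<phi> = \<phi> and G = G])
       (use hardy_inequality_test_fun[OF assms(1-4) \<phi> G] lim_u lim_g wedge_sets in simp_all)
  then show ?thesis by simp
qed

end
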